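(* Consider Algorithm AUX with parameter $t_0$ on an instance satisfying the standing assumption, with an edge labeling as in the context. For every offline vertex $u$ and every $t\in[0,1]$, we have $f_u(t)=f(t)$.
   Context: **Model.** Poisson arrival model. Each online type $i$ independently arrives according to a Poisson process of rate $\lambda_i$ on $[0,1]$. On arrival, a vertex is immediately and irrevocably matched to an unmatched offline neighbor or discarded. Each offline vertex is matched at most once. The instance is a bipartite graph $(I,J,E)$ with rates $\lambda_i>0$. **Standing assumption.** There are values $x_{ij}\ge0$ (an optimal Jaillet–Lu LP solution) with $\sum_i x_{ij}=1$ for all $j$, and each type is one of two kinds: - first-class: one neighbor $j$, with $x_{ij}=\lambda_i$; - second-class: two neighbors $j_1,j_2$, with $x_{ij_1}=x_{ij_2}=\lambda_i/2$. **Labeling.** Each edge is labeled first-class or second-class. Edges of first-class types are labeled first-class. For every $j$, the first-class-labeled edges at $j$ have total $x$-value $1-\ln2$. **Reference process.** $H$ has offline vertices $a,b$; a type of rate $2\ln2$ adjacent to both; and types of rate $1-\ln2$ adjacent only to $a$, resp. only to $b$. Algorithm RES with parameter $t_0$ works as follows: - single-neighbor arrivals are matched if their neighbor is unmatched; - a two-neighbor arrival at time $t>t_0$ with an unmatched neighbor is matched to a uniformly random unmatched neighbor. On $H$ under RES, $f(t)$ is the probability that a given offline vertex is matched by time $t$, $g(t)$ the probability both are, and $\bar g=1-g$. **Algorithm AUX (parameter $t_0$).** Under AUX: - $f_u(t)$ is the probability that offline $u$ is matched by time $t$, and $\bar f_u=1-f_u$; - $g'_{u,v}(t)$ is the probability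 that both $u$ and $v$ are unmatched at time $t$. Edges are used only if their offline endpoint is unmatched. - A first-class arrival is matched to its neighbor if possible. - A second-class arrival of type $i$ with neighbors $u,v$ chooses at most one edge, with disjoint probabilities: - each first-class-labeled edge $(i,u)$ with probability $1/2$; - if the arrival time is $t>t_0$, each second-class-labeled edge $(i,u)$ with probability $\frac12\min\{\bar g(t)/(2\bar f_u(t)-g'_{u,v}(t)),1\}$ if $v$ is unmatched, or $\min\{\bar g(t)/(2\bar f_u(t)-g'_{u,v}(t)),1\}$ if $v$ is matched. *)

theory Defs
  imports "HOL-Analysis.Analysis"
begin

text \<open>Law of a time-inhomogeneous continuous-time Markov chain on a finite state
space Omega on the time interval [0,1], started in s0, with jump rates Q r s s'
(rate of jumping from s to s' at time r).  It is characterised as a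
(non-negative, continuous) solution of the Kolmogorov forward equation in
integral form.  p t s is the probability of being in state s at time t.\<close>
definition kolmogorov_sol ::
  "'s set \<Rightarrow> 's \<Rightarrow> (real \<Rightarrow> 's \<Rightarrow> 's \<Rightarrow> real) \<Rightarrow> (real \<Rightarrow> 's \<Rightarrow> real) \<Rightarrow> bool" where
  "kolmogorov_sol \<Omega> s0 Q p \<longleftrightarrow>
     (\<forall>s\<in>\<Omega>. p 0 s = (if s = s0 then 1 else 0)) \<and>
     (\<forall>s\<in>\<Omega>. continuous_on {0..1} (\<lambda>t. p t s)) \<and>
     (\<forall>t\<in>{0..1}. \<forall>s\<in>\<Omega>. 0 \<le> p t s) \<and>
     (\<forall>t\<in>{0..1}. \<forall>s\<in>\<Omega>.
        ((\<lambda>r. (\<Sum>s'\<in>\<Omega> - {s}. p r s' * Q r s' s) - (\<Sum>s'\<in>\<Omega> - {s}. p r s * Q r s s'))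
          has_integral (p t s - p 0 s)) {0..t})"

text \<open>Standing assumption on the instance: online types I with neighbourhoods N i
and Poisson rates lam i, offline vertices J, LP values x.\<close>
definition standing_instance ::
  "'i set \<Rightarrow> 'j set \<Rightarrow> ('i \<Rightarrow> 'j set) \<Rightarrow> ('i \<Rightarrow> real) \<Rightarrow> ('i \<Rightarrow> 'j \<Rightarrow> real) \<Rightarrow> bool" where
  "standing_instance I J N lam x \<longleftrightarrow>
     finite I \<and> finite J \<and>
     (\<forall>i\<in>I. N i \<subseteq> J \<and> 0 < lam i \<and> (\<forall>j\<in>N i. 0 \<le> x i j) \<and>
        ((\<exists>j. N i = {j} \<and> x i j = lam i) \<or>
         (\<exists>j1 j2. j1 \<noteq> j2 \<and> N i = {j1, j2} \<and> x i j1 = lam i / 2 \<and> x i j2 = lam i / 2))) \<and>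
     (\<forall>j\<in>J. (\<Sum>i\<in>{i\<in>I. j \<in> N i}. x i j) = 1)"

text \<open>FC is the set of edges labelled first-class.\<close>
definition valid_labeling ::
  "'i set \<Rightarrow> 'j set \<Rightarrow> ('i \<Rightarrow> 'j set) \<Rightarrow> ('i \<Rightarrow> 'j \<Rightarrow> real) \<Rightarrow> ('i \<times> 'j) set \<Rightarrow> bool" where
  "valid_labeling I J N x FC \<longleftrightarrow>
     FC \<subseteq> {(i, j). i \<in> I \<and> j \<in> N i} \<and>
     (\<forall>i\<in>I. card (N i) = 1 \<longrightarrow> (\<forall>j\<in>N i. (i, j) \<in> FC)) \<and>
     (\<forall>j\<in>J. (\<Sum>i\<in>{i\<in>I. j \<in> N i \<and> (i, j) \<in> FC}. x i j) = 1 - ln 2)"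

text \<open>Reference process H under RES.  Offline vertices of H: a = True, b = False;
a state is the set of matched offline vertices.\<close>
definition res_Q :: "real \<Rightarrow> real \<Rightarrow> bool set \<Rightarrow> bool set \<Rightarrow> real" where
  "res_Q t0 r S S' =
     (\<Sum>w\<in>UNIV - S. if S' = insert w S then
        (1 - ln 2) + (if t0 < r then 2 * ln 2 * (if Not w \<in> S then 1 else 1 / 2) else 0)
      else 0)"

definition res_f :: "(real \<Rightarrow> bool set \<Rightarrow> real) \<Rightarrow> real \<Rightarrow> real" where
  "res_f pH t = (\<Sum>S\<in>{S. True \<in> S}. pH t S)"

definition res_g :: "(real \<Rightarrow> bool set \<Rightarrow> real) \<Rightarrow> real \<Rightarrow> real" where
  "res_g pH t = pH t UNIV"

definition aux_f :: "'j set \<Rightarrow> (real \<Rightarrow> 'j set \<Rightarrow> real) \<Rightarrow> 'j \<Rightarrow> real \<Rightarrow> real" where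
  "aux_f J p u t = (\<Sum>S\<in>{S. S \<subseteq> J \<and> u \<in> S}. p t S)"

definition aux_g' :: "'j set \<Rightarrow> (real \<Rightarrow> 'j set \<Rightarrow> real) \<Rightarrow> 'j \<Rightarrow> 'j \<Rightarrow> real \<Rightarrow> real" where
  "aux_g' J p u v t = (\<Sum>S\<in>{S. S \<subseteq> J \<and> u \<notin> S \<and> v \<notin> S}. p t S)"

text \<open>Probability that an arrival of type i at time r, when the matched set is S
(with u unmatched), is matched to u under AUX.\<close>
definition aux_prob ::
  "real \<Rightarrow> 'j set \<Rightarrow> ('i \<Rightarrow> 'j set) \<Rightarrow> ('i \<times> 'j) set \<Rightarrow> (real \<Rightarrow> bool set \<Rightarrow> real)
   \<Rightarrow> (real \<Rightarrow> 'j set \<Rightarrow> real) \<Rightarrow> 'i \<Rightarrow> 'j \<Rightarrow> real \<Rightarrow> 'j set \<Rightarrow> real" where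
  "aux_prob t0 J N FC pH p i u r S =
     (if card (N i) = 1 then 1
      else (let v = the_elem (N i - {u});
                m = min ((1 - res_g pH r) / (2 * (1 - aux_f J p u r) - aux_g' J p u v r)) 1
            in if (i, u) \<in> FC then 1 / 2
               else if t0 < r then (if v \<in> S then m else m / 2) else 0))"

definition aux_Q ::
  "real \<Rightarrow> 'i set \<Rightarrow> 'j set \<Rightarrow> ('i \<Rightarrow> 'j set) \<Rightarrow> ('i \<Rightarrow> real) \<Rightarrow> ('i \<times> 'j) set
   \<Rightarrow> (real \<Rightarrow> bool set \<Rightarrow> real) \<Rightarrow> (real \<Rightarrow> 'j set \<Rightarrow> real)
   \<Rightarrow> real \<Rightarrow> 'j set \<Rightarrow> 'j set \<Rightarrow> real" where
  "aux_Q t0 I J N lam FC pH p r S S' =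
     (\<Sum>u\<in>J - S. if S' = insert u S then
        (\<Sum>i\<in>{i\<in>I. u \<in> N i}. lam i * aux_prob t0 J N FC pH p i u r S)
      else 0)"

end

theory Submission
  imports Defs
begin

text \<open>Let F(t) and G(t) be the probabilities that, in the reference process H, a given offline
vertex resp. both offline vertices are unmatched at time t, and measure the deviation of AUX
from H by
  e(t) = \<Sum>[u] |1 - f_u(t) - F(t)| + \<Sum>[u \<noteq> v] max (g'_uv(t) - G(t)) 0.
All these probabilities satisfy integral equations obtained from the Kolmogorov forward equations.
At every offline vertex the first-class edges carry total rate 1 - ln 2 and the second-class edges
total rate 2 ln 2, as in H, and the selection probability min {(1 - g)/(2 (1 - f_u) - g'_uv), 1}
makes the rate at which u gets matched differ from its value in H by O(e).  For g'_uv - G only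
a one-sided bound holds, and only while g'_uv \<ge> G, which suffices for the positive part.  Hence
e(t) \<le> K \<integral>[0,t] e, and Gronwall's inequality gives e = 0.  The symmetry of the two vertices of H,
which gives 1 - g = 2 F - G, follows from the same Gronwall argument.\<close>

section \<open>Kolmogorov forward equations\<close>

lemma kolmogorov_sol_has_integral_expectation:
  fixes Q :: "real \<Rightarrow> 's \<Rightarrow> 's \<Rightarrow> real" and \<phi> :: "'s \<Rightarrow> real"
  assumes sol: "kolmogorov_sol \<Omega> s0 Q p" and fin: "finite \<Omega>" and t: "t \<in> {0..1}"
  shows "((\<lambda>r. \<Sum>s\<in>\<Omega>. p r s * (\<Sum>s'\<in>\<Omega>-{s}. Q r s s' * (\<phi> s' - \<phi> s)))
          has_integral (\<Sum>s\<in>\<Omega>. \<phi> s * (p t s - p 0 s))) {0..t}"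
proof -
  have "((\<lambda>r. (\<Sum>s'\<in>\<Omega>-{s}. p r s' * Q r s' s) - (\<Sum>s'\<in>\<Omega>-{s}. p r s * Q r s s'))
      has_integral (p t s - p 0 s)) {0..t}" if "s \<in> \<Omega>" for s
    using sol t that unfolding kolmogorov_sol_def by blast
  then have "((\<lambda>r. \<Sum>s\<in>\<Omega>. \<phi> s * ((\<Sum>s'\<in>\<Omega>-{s}. p r s' * Q r s' s) - (\<Sum>s'\<in>\<Omega>-{s}. p r s * Q r s s')))
      has_integral (\<Sum>s\<in>\<Omega>. \<phi> s * (p t s - p 0 s))) {0..t}"
    by (intro has_integral_sum fin has_integral_mult_right)
  moreover have "(\<Sum>s\<in>\<Omega>. \<phi> s * ((\<Sum>s'\<in>\<Omega>-{s}. p r s' * Q r s' s) - (\<Sum>s'\<in>\<Omega>-{s}. p r s * Q r s s')))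
      = (\<Sum>s\<in>\<Omega>. p r s * (\<Sum>s'\<in>\<Omega>-{s}. Q r s s' * (\<phi> s' - \<phi> s)))" for r
  proof -
    have "(\<Sum>s\<in>\<Omega>. \<Sum>s'\<in>\<Omega>-{s}. \<phi> s * p r s' * Q r s' s)
        = (\<Sum>s\<in>\<Omega>. \<Sum>s'\<in>{s'\<in>\<Omega>. s \<noteq> s'}. \<phi> s * p r s' * Q r s' s)"
      by (intro sum.cong) auto
    also have "\<dots> = (\<Sum>s'\<in>\<Omega>. \<Sum>s\<in>{s\<in>\<Omega>. s \<noteq> s'}. \<phi> s * p r s' * Q r s' s)"
      by (rule sum.swap_restrict[OF fin fin])
    also have "\<dots> = (\<Sum>s'\<in>\<Omega>. \<Sum>s\<in>\<Omega>-{s'}. \<phi> s * p r s' * Q r s' s)"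
      by (intro sum.cong) auto
    finally have "(\<Sum>s\<in>\<Omega>. \<Sum>s'\<in>\<Omega>-{s}. \<phi> s * p r s' * Q r s' s)
        = (\<Sum>s\<in>\<Omega>. \<Sum>s'\<in>\<Omega>-{s}. \<phi> s' * p r s * Q r s s')" .
    then show ?thesis
      by (simp add: right_diff_distrib sum_distrib_left sum_subtractf algebra_simps)
  qed
  ultimately show ?thesis by simp
qed

lemma sum_insert_jumps_avoiding:
  fixes R :: "'j \<Rightarrow> real"
  assumes fin: "finite J" and S: "S \<subseteq> J" and V: "V \<subseteq> J"
  shows "(\<Sum>S'\<in>Pow J - {S}. (\<Sum>w\<in>J-S. if S' = insert w S then R w else 0)
            * (of_bool (S' \<inter> V = {}) - of_bool (S \<inter> V = {})))
       = (if S \<inter> V = {} then - (\<Sum>w\<in>V. R w) else 0)"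
proof -
  let ?\<phi> = "\<lambda>S. of_bool (S \<inter> V = {}) :: real"
  have "(\<Sum>S'\<in>Pow J - {S}. (\<Sum>w\<in>J-S. if S' = insert w S then R w else 0) * (?\<phi> S' - ?\<phi> S))
      = (\<Sum>w\<in>J-S. \<Sum>S'\<in>Pow J - {S}. if S' = insert w S then R w * (?\<phi> S' - ?\<phi> S) else 0)"
    unfolding sum_distrib_right by (subst sum.swap) (intro sum.cong; auto)
  also have "\<dots> = (\<Sum>w\<in>J-S. R w * (?\<phi> (insert w S) - ?\<phi> S))"
    using fin S by (intro sum.cong refl) (auto simp: sum.delta)
  also have "\<dots> = (if S \<inter> V = {} then - (\<Sum>w\<in>V. R w) else 0)"
  proof (cases "S \<inter> V = {}")
    case True
    then have "(\<Sum>w\<in>J-S. R w * (?\<phi> (insert w S) - ?\<phi> S)) = (\<Sum>w\<in>J-S. if w \<in> V then - R w else 0)"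
      by (intro sum.cong) auto
    also have "\<dots> = (\<Sum>w\<in>{w\<in>J-S. w \<in> V}. - R w)"
      using fin by (simp only: finite_Diff sum.inter_filter)
    also have "{w\<in>J-S. w \<in> V} = V" using V True by auto
    finally show ?thesis using True by (simp add: sum_negf)
  qed (auto intro!: sum.neutral)
  finally show ?thesis .
qed

lemma kolmogorov_sol_avoid_has_integral:
  fixes Q :: "real \<Rightarrow> 'j set \<Rightarrow> 'j set \<Rightarrow> real" and R :: "real \<Rightarrow> 'j \<Rightarrow> 'j set \<Rightarrow> real"
  assumes sol: "kolmogorov_sol (Pow J) {} Q p" and fin: "finite J" and t: "t \<in> {0..1}"
    and Q: "\<And>r S S'. Q r S S' = (\<Sum>w\<in>J-S. if S' = insert w S then R r w S else 0)"
    and V: "V \<subseteq> J"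
  shows "((\<lambda>r. - (\<Sum>S\<in>{S. S \<subseteq> J \<and> S \<inter> V = {}}. p r S * (\<Sum>w\<in>V. R r w S)))
          has_integral ((\<Sum>S\<in>{S. S \<subseteq> J \<and> S \<inter> V = {}}. p t S) - 1)) {0..t}"
proof -
  let ?\<phi> = "\<lambda>S. of_bool (S \<inter> V = {}) :: real"
  have finP: "finite (Pow J)" using fin by simp
  have avoid: "{S\<in>Pow J. S \<inter> V = {}} = {S. S \<subseteq> J \<and> S \<inter> V = {}}" by auto
  have p0: "p 0 S = of_bool (S = {})" if "S \<in> Pow J" for S
    using sol that unfolding kolmogorov_sol_def by auto
  have "(\<Sum>S\<in>Pow J. ?\<phi> S * p 0 S) = (\<Sum>S\<in>Pow J. if S = {} then 1 else 0)"
    by (intro sum.cong) (auto simp: p0)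
  moreover have "(\<Sum>S\<in>Pow J. ?\<phi> S * p t S) = (\<Sum>S\<in>Pow J. if S \<inter> V = {} then p t S else 0)"
    by (intro sum.cong) auto
  ultimately have change: "(\<Sum>S\<in>Pow J. ?\<phi> S * (p t S - p 0 S)) = (\<Sum>S\<in>{S. S \<subseteq> J \<and> S \<inter> V = {}}. p t S) - 1"
    using finP by (simp add: right_diff_distrib sum_subtractf avoid flip: sum.inter_filter)
  have "(\<Sum>S'\<in>Pow J-{S}. Q r S S' * (?\<phi> S' - ?\<phi> S)) = (if S \<inter> V = {} then - (\<Sum>w\<in>V. R r w S) else 0)"
    if "S \<in> Pow J" for r S
    unfolding Q using that by (intro sum_insert_jumps_avoiding fin V) auto
  then have "(\<Sum>S\<in>Pow J. p r S * (\<Sum>S'\<in>Pow J-{S}. Q r S S' * (?\<phi> S' - ?\<phi> S)))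
      = (\<Sum>S\<in>Pow J. if S \<inter> V = {} then - (p r S * (\<Sum>w\<in>V. R r w S)) else 0)" for r
    by (intro sum.cong) simp_all
  then show ?thesis
    using kolmogorov_sol_has_integral_expectation[OF sol finP t, of ?\<phi>] finP
    by (simp add: change avoid sum_negf flip: sum.inter_filter)
qed

section \<open>Integral inequalities\<close>

lemma has_integral_le_integral:
  fixes \<beta> e :: "real \<Rightarrow> real"
  assumes "(\<beta> has_integral I) {a..b}" and "continuous_on {a..b} e" and "\<And>r. r \<in> {a..b} \<Longrightarrow> \<beta> r \<le> e r"
  shows "I \<le> integral {a..b} e"
  using has_integral_le[OF assms(1) integrable_integral[OF integrable_continuous_interval[OF assms(2)]]] assms(3)
  by blast

lemma has_integral_abs_le_integral:
  fixes \<beta> e :: "real \<Rightarrow> real"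
  assumes \<beta>: "(\<beta> has_integral I) {a..b}" and e: "continuous_on {a..b} e"
    and le: "\<And>r. r \<in> {a..b} \<Longrightarrow> \<bar>\<beta> r\<bar> \<le> e r"
  shows "\<bar>I\<bar> \<le> integral {a..b} e"
proof -
  have "I \<le> integral {a..b} e" using has_integral_le_integral[OF \<beta> e] le by force
  moreover have "- I \<le> integral {a..b} e"
    using has_integral_le_integral[OF has_integral_neg[OF \<beta>] e] le by force
  ultimately show ?thesis by linarith
qed

lemma gronwall_zero:
  fixes e :: "real \<Rightarrow> real"
  assumes cont: "continuous_on {0..b} e" and nonneg: "\<And>t. t \<in> {0..b} \<Longrightarrow> 0 \<le> e t" and "0 \<le> K"
    and le: "\<And>t. t \<in> {0..b} \<Longrightarrow> e t \<le> K * integral {0..t} e"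
    and t: "t \<in> {0..b}"
  shows "e t = 0"
proof -
  define E where "E s = integral {0..s} e" for s
  define W where "W s = E s * exp (- K * s)" for s
  have "E t \<le> 0"
  proof (cases "t = 0")
    case True then show ?thesis by (simp add: E_def)
  next
    case False
    with t have "0 < t" by auto
    have ct: "continuous_on {0..t} e" using t by (intro continuous_on_subset[OF cont]) auto
    have "(W has_real_derivative (e s - K * E s) * exp (- K * s)) (at s within {0..t})"
      if s: "s \<in> {0..t}" for s
    proof -
      have "(E has_real_derivative e s) (at s within {0..t})"
        unfolding E_def by (rule integral_has_real_derivative[OF ct s])
      then have "((\<lambda>s. E s * exp (- K * s)) has_real_derivative
          (e s * exp (- K * s) + (exp (- K * s) * (- K)) * E s)) (at s within {0..t})"
        by (auto intro!: derivative_eq_intros)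
      then show ?thesis unfolding W_def by (simp add: algebra_simps)
    qed
    then have "\<exists>\<xi>\<in>{0<..<t}. W t - W 0 = (\<lambda>h. (e \<xi> - K * E \<xi>) * exp (- K * \<xi>) * h) (t - 0)"
      by (intro mvt_simple[OF \<open>0 < t\<close>] has_field_derivative_imp_has_derivative) auto
    then obtain \<xi> where \<xi>: "\<xi> \<in> {0<..<t}" "W t - W 0 = (e \<xi> - K * E \<xi>) * exp (- K * \<xi>) * t"
      by auto
    have "e \<xi> - K * E \<xi> \<le> 0" using le[of \<xi>] \<xi>(1) t by (auto simp: E_def)
    then have "W t \<le> 0" using \<xi>(2) \<open>0 < t\<close> by (simp add: W_def E_def mult_nonpos_nonneg)
    then show ?thesis by (simp add: W_def mult_le_0_iff)
  qed
  then have "e t \<le> 0" using le[OF t] \<open>0 \<le> K\<close> unfolding E_def by (smt (verit) mult_nonneg_nonpos)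
  with nonneg[OF t] show ?thesis by simp
qed

lemma last_zero_before:
  fixes h :: "real \<Rightarrow> real"
  assumes t: "0 \<le> t" and hc: "continuous_on {0..t} h" and "h 0 \<le> 0" and "0 < h t"
  obtains t1 where "0 \<le> t1" "t1 \<le> t" "h t1 = 0" "\<And>r. r \<in> {t1..t} \<Longrightarrow> 0 \<le> h r"
proof -
  define Z where "Z = {0..t} \<inter> h -` {..0}"
  have "closed Z" unfolding Z_def by (rule continuous_closed_preimage[OF hc]) auto
  moreover have "bounded Z" unfolding Z_def by (rule bounded_subset[of "{0..t}"]) auto
  ultimately have "compact Z" by (simp add: compact_eq_bounded_closed)
  moreover have "Z \<noteq> {}" unfolding Z_def using t \<open>h 0 \<le> 0\<close> by auto
  ultimately have "\<exists>t1\<in>Z. \<forall>y\<in>Z. y \<le> t1" by (rule compact_attains_sup)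
  then obtain t1 where "t1 \<in> Z" and t1_max: "\<And>y. y \<in> Z \<Longrightarrow> y \<le> t1" by blast
  then have t1: "0 \<le> t1" "t1 \<le> t" "h t1 \<le> 0" unfolding Z_def by auto
  obtain z where z: "t1 \<le> z" "z \<le> t" "h z = 0"
    using IVT'[of h t1 0 t] t1 \<open>0 < h t\<close> continuous_on_subset[OF hc, of "{t1..t}"] by force
  then have "z \<in> Z" unfolding Z_def using t1 by auto
  then have "z = t1" using t1_max z by force
  then have "h t1 = 0" using z by simp
  moreover have "0 \<le> h r" if "r \<in> {t1..t}" for r
  proof (rule ccontr)
    assume "\<not> 0 \<le> h r"
    then have "r \<in> Z" unfolding Z_def using that t1 by auto
    then have "r \<le> t1" by (rule t1_max)
    then show False using that \<open>h t1 = 0\<close> \<open>\<not> 0 \<le> h r\<close> by auto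
  qed
  ultimately show ?thesis using t1(1,2) by (intro that)
qed

text \<open>Only the times where \<open>h \<ge> 0\<close> matter: if \<open>h t > 0\<close>, then \<open>h\<close> stays nonnegative between its
last zero \<open>t1\<close> before \<open>t\<close> and \<open>t\<close>, so \<open>h t = \<integral>[t1,t] \<beta> \<le> \<integral>[t1,t] e\<close>.\<close>

lemma integral_bound_while_nonneg:
  fixes h \<beta> e :: "real \<Rightarrow> real"
  assumes t: "0 \<le> t" and hc: "continuous_on {0..t} h"
    and h: "\<And>s. s \<in> {0..t} \<Longrightarrow> (\<beta> has_integral h s) {0..s}"
    and \<beta>: "\<And>r. r \<in> {0..t} \<Longrightarrow> 0 \<le> h r \<Longrightarrow> \<beta> r \<le> e r"
    and ec: "continuous_on {0..t} e" and en: "\<And>r. r \<in> {0..t} \<Longrightarrow> 0 \<le> e r"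
  shows "h t \<le> integral {0..t} e"
proof -
  have eint: "e integrable_on {0..t}" by (rule integrable_continuous_interval[OF ec])
  have e_nonneg: "0 \<le> integral {c..d} e" if "0 \<le> c" "d \<le> t" for c d
    using that by (intro Henstock_Kurzweil_Integration.integral_nonneg integrable_subinterval_real[OF eint])
      (auto intro: en)
  have "(\<beta> has_integral h 0) {0..0}" using h[of 0] t by simp
  then have "h 0 = 0" by (rule has_integral_unique) auto
  show ?thesis
  proof (cases "h t \<le> 0")
    case True then show ?thesis using e_nonneg[of 0 t] by linarith
  next
    case False
    then have "0 < h t" by simp
    obtain t1 where t1: "0 \<le> t1" "t1 \<le> t" "h t1 = 0" and h_nonneg: "\<And>r. r \<in> {t1..t} \<Longrightarrow> 0 \<le> h r"
      using last_zero_before[OF t hc _ \<open>0 < h t\<close>] \<open>h 0 = 0\<close> by (metis order_refl)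
    have bint: "\<beta> integrable_on {0..t}" using h[of t] t by auto
    have "integral {0..t1} \<beta> + integral {t1..t} \<beta> = integral {0..t} \<beta>"
      by (rule Henstock_Kurzweil_Integration.integral_combine[OF t1(1,2) bint])
    moreover have "integral {0..t1} \<beta> = h t1" "integral {0..t} \<beta> = h t"
      using h[of t1] h[of t] t1 by (auto intro: integral_unique)
    ultimately have "h t = integral {t1..t} \<beta>" using \<open>h t1 = 0\<close> by simp
    also have "\<dots> \<le> integral {t1..t} e"
      using has_integral_le_integral[OF integrable_integral[OF integrable_subinterval_real[OF bint]], of t1 t e]
        continuous_on_subset[OF ec, of "{t1..t}"] \<beta> h_nonneg t1 by auto
    also have "\<dots> \<le> integral {0..t1} e + integral {t1..t} e" using e_nonneg[of 0 t1] t1 by simp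
    also have "\<dots> = integral {0..t} e"
      by (rule Henstock_Kurzweil_Integration.integral_combine[OF t1(1,2) eint])
    finally show ?thesis .
  qed
qed

lemma sum_weighted_le:
  fixes w X :: "'a \<Rightarrow> real"
  assumes "\<And>i. i \<in> A \<Longrightarrow> 0 \<le> w i" and "\<And>i. i \<in> A \<Longrightarrow> X i \<le> B"
  shows "(\<Sum>i\<in>A. w i * X i) \<le> (\<Sum>i\<in>A. w i) * B"
  using assms by (simp add: sum_distrib_right mult_left_mono sum_mono)

lemma sum_weighted_abs_le:
  fixes w X :: "'a \<Rightarrow> real"
  assumes "\<And>i. i \<in> A \<Longrightarrow> 0 \<le> w i" and "\<And>i. i \<in> A \<Longrightarrow> \<bar>X i\<bar> \<le> B"
  shows "\<bar>\<Sum>i\<in>A. w i * X i\<bar> \<le> (\<Sum>i\<in>A. w i) * B"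
proof -
  have "\<bar>\<Sum>i\<in>A. w i * X i\<bar> \<le> (\<Sum>i\<in>A. w i * \<bar>X i\<bar>)"
    using sum_abs[of "\<lambda>i. w i * X i" A] assms(1) by (simp add: abs_mult)
  also have "\<dots> \<le> (\<Sum>i\<in>A. w i) * B" by (rule sum_weighted_le) (use assms in auto)
  finally show ?thesis .
qed

section \<open>Inequalities for the selection ratio\<close>

lemma min_ratio_half_diff_abs_le:
  fixes a D :: real
  assumes "0 \<le> a" and "0 \<le> D"
  shows "\<bar>a / 2 - min (a / D) 1 * (D / 2)\<bar> \<le> max (a - D) 0 / 2"
proof (cases "D = 0")
  case False
  then have "0 < D" using assms by simp
  then show ?thesis by (cases "a \<le> D") (auto simp: min_def le_divide_eq)
qed (use assms in simp)

text \<open>In the application \<open>F\<close> and \<open>G\<close> are the probabilities in H that one resp. both vertices are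
unmatched (so \<open>2 F - G = 1 - g\<close>), \<open>Fu\<close> and \<open>g2\<close> their counterparts in AUX, and \<open>W\<close>, \<open>T\<close> the
probabilities of the two events that weight a second-class edge.\<close>

lemma min_ratio_pair_deficit_le:
  fixes T W g2 G F Fu \<delta> \<eta> :: real
  assumes "0 \<le> T" "T \<le> W" "T \<le> g2" "0 \<le> G" "G \<le> W" "G \<le> F" "W \<le> Fu" "g2 \<le> Fu"
    and \<delta>: "\<bar>Fu - F\<bar> \<le> \<delta>" and \<eta>: "g2 - G \<le> \<eta>" "0 \<le> \<eta>"
  shows "G / 2 - min ((2 * F - G) / (2 * Fu - g2)) 1 * (W - T / 2) \<le> 2 * (\<delta> + \<eta>)"
proof -
  define D where "D = 2 * Fu - g2"
  define m where "m = min ((2 * F - G) / D) 1"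
  have "Fu \<le> D" "0 \<le> m" using assms by (auto simp: D_def m_def)
  have "0 \<le> m * (W - T / 2)" using assms \<open>0 \<le> m\<close> by simp
  have "G / 2 - m * (W - T / 2) \<le> 2 * (\<delta> + \<eta>)"
  proof (cases "m = 1 \<or> G \<le> 2 * \<delta>")
    case True
    then show ?thesis using assms \<open>0 \<le> m * (W - T / 2)\<close> by auto
  next
    case False
    then have m: "m = (2 * F - G) / D" and "2 * \<delta> < G" by (auto simp: m_def min_def)
    then have "0 < D" "F < 2 * D" using assms \<open>Fu \<le> D\<close> by auto
    have "G / 2 - m * (W - T / 2) \<le> G / 2 - m * (G - g2 / 2)"
      using assms \<open>0 \<le> m\<close> by (intro diff_left_mono mult_left_mono) auto
    also have "\<dots> = (G * (Fu - F) + (F - G) * (g2 - G)) / D"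
      using \<open>0 < D\<close> unfolding m D_def by (simp add: field_simps)
    also have "\<dots> \<le> (F * \<delta> + F * \<eta>) / D"
    proof -
      have "0 \<le> \<delta>" using \<delta> by linarith
      have "G * (Fu - F) \<le> G * \<delta>" using assms by (intro mult_left_mono) auto
      also have "\<dots> \<le> F * \<delta>" using assms \<open>0 \<le> \<delta>\<close> by (intro mult_right_mono) auto
      finally have "G * (Fu - F) \<le> F * \<delta>" .
      moreover have "(F - G) * (g2 - G) \<le> (F - G) * \<eta>" using assms by (intro mult_left_mono) auto
      moreover have "(F - G) * \<eta> \<le> F * \<eta>" using assms by (intro mult_right_mono) auto
      ultimately show ?thesis using \<open>0 < D\<close> by (intro divide_right_mono) auto
    qed
    also have "\<dots> \<le> 2 * (\<delta> + \<eta>)"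
    proof -
      have "F * (\<delta> + \<eta>) \<le> (2 * D) * (\<delta> + \<eta>)"
        using \<open>F < 2 * D\<close> assms by (intro mult_right_mono) auto
      then show ?thesis using \<open>0 < D\<close> by (simp add: divide_le_eq algebra_simps)
    qed
    finally show ?thesis .
  qed
  then show ?thesis unfolding m_def D_def .
qed

section \<open>The reference process\<close>

lemma UNIV_bool_set: "(UNIV :: bool set set) = {{}, {True}, {False}, UNIV}"
  by (simp add: UNIV_bool Pow_insert flip: Pow_UNIV) (auto simp: UNIV_bool)

lemma sum_UNIV_bool_set: "(\<Sum>S\<in>UNIV. f S) = f {} + f {True} + f {False} + f (UNIV :: bool set)"
proof -
  have "{} \<notin> {{True}, {False}, UNIV :: bool set}" "{True} \<notin> {{False}, UNIV :: bool set}"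
    "{False} \<noteq> (UNIV :: bool set)"
    by (auto simp: set_eq_iff)
  then show ?thesis unfolding UNIV_bool_set by (simp add: add.assoc)
qed

lemma bool_sets_avoiding: "{S::bool set. S \<subseteq> UNIV \<and> S \<inter> {w} = {}} = {{}, {\<not> w}}"
  using UNIV_bool_set by (cases w) (auto simp: UNIV_bool)

definition res_jump_rate :: "real \<Rightarrow> real \<Rightarrow> bool \<Rightarrow> bool set \<Rightarrow> real" where
  "res_jump_rate t0 r w S =
     (1 - ln 2) + (if t0 < r then 2 * ln 2 * (if Not w \<in> S then 1 else 1 / 2) else 0)"

lemma res_Q_eq: "res_Q t0 r S S' = (\<Sum>w\<in>UNIV - S. if S' = insert w S then res_jump_rate t0 r w S else 0)"
  unfolding res_Q_def res_jump_rate_def ..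

definition res_unmatched :: "(real \<Rightarrow> bool set \<Rightarrow> real) \<Rightarrow> real \<Rightarrow> real" where
  "res_unmatched pH r = pH r {} + pH r {False}"

context
  fixes t0 :: real and pH :: "real \<Rightarrow> bool set \<Rightarrow> real"
  assumes res_sol: "kolmogorov_sol UNIV {} (res_Q t0) pH"
begin

lemma res_avoid_has_integral:
  assumes "t \<in> {0..1}" and "V \<subseteq> UNIV"
  shows "((\<lambda>r. - (\<Sum>S\<in>{S. S \<subseteq> UNIV \<and> S \<inter> V = {}}. pH r S * (\<Sum>w\<in>V. res_jump_rate t0 r w S)))
          has_integral ((\<Sum>S\<in>{S. S \<subseteq> UNIV \<and> S \<inter> V = {}}. pH t S) - 1)) {0..t}"
proof -
  have "kolmogorov_sol (Pow UNIV) {} (res_Q t0) pH" using res_sol by simp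
  then show ?thesis
    by (rule kolmogorov_sol_avoid_has_integral[OF _ finite_class.finite_UNIV assms(1) res_Q_eq assms(2)])
qed

lemma res_avoid_vertex_has_integral:
  assumes "t \<in> {0..1}"
  shows "((\<lambda>r. - ((1 - ln 2) * (pH r {} + pH r {\<not> w}) + (if t0 < r then ln 2 else 0) * (pH r {} + 2 * pH r {\<not> w})))
          has_integral (pH t {} + pH t {\<not> w} - 1)) {0..t}"
proof -
  have "(\<Sum>S\<in>{{}, {\<not> w}}. pH r S * (\<Sum>v\<in>{w}. res_jump_rate t0 r v S))
      = (1 - ln 2) * (pH r {} + pH r {\<not> w}) + (if t0 < r then ln 2 else 0) * (pH r {} + 2 * pH r {\<not> w})" for r
    by (simp add: res_jump_rate_def algebra_simps)
  then show ?thesis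
    using res_avoid_has_integral[OF assms, of "{w}"] unfolding bool_sets_avoiding by simp
qed

lemma res_empty_has_integral:
  assumes "t \<in> {0..1}"
  shows "((\<lambda>r. - (2 * ((1 - ln 2) * pH r {} + (if t0 < r then ln 2 else 0) * pH r {})))
          has_integral (pH t {} - 1)) {0..t}"
proof -
  have avoid: "{S::bool set. S \<subseteq> UNIV \<and> S \<inter> UNIV = {}} = {{}}" by auto
  have "(\<Sum>S\<in>{{}}. pH r S * (\<Sum>w\<in>UNIV. res_jump_rate t0 r w S))
      = 2 * ((1 - ln 2) * pH r {} + (if t0 < r then ln 2 else 0) * pH r {})" for r
    by (simp add: UNIV_bool res_jump_rate_def algebra_simps)
  then show ?thesis
    using res_avoid_has_integral[OF assms, of UNIV] unfolding avoid by simp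
qed

lemma res_total_mass:
  assumes "t \<in> {0..1}"
  shows "pH t {} + pH t {True} + pH t {False} + pH t UNIV = 1"
proof -
  have "{S::bool set. S \<subseteq> UNIV \<and> S \<inter> {} = {}} = UNIV" by simp
  then have "((\<lambda>r. 0) has_integral ((\<Sum>S\<in>UNIV. pH t S) - 1)) {0..t}"
    using res_avoid_has_integral[OF assms, of "{}"] by simp
  then have "(\<Sum>S\<in>UNIV. pH t S) - 1 = 0" using has_integral_0 by (rule has_integral_unique)
  then show ?thesis by (simp add: sum_UNIV_bool_set)
qed

text \<open>H is only given by its forward equation, so its symmetry has to be derived: the difference
of the two one-vertex probabilities satisfies \<open>d t = - \<integral>[0,t] c d\<close> with \<open>|c| \<le> 2\<close>.\<close>

lemma res_symmetric:
  assumes t: "t \<in> {0..1}"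
  shows "pH t {True} = pH t {False}"
proof -
  define d where "d r = pH r {True} - pH r {False}" for r
  have cont: "continuous_on {0..1} (\<lambda>r. pH r S)" for S
    using res_sol unfolding kolmogorov_sol_def by blast
  have d_cont: "continuous_on {0..1} d" unfolding d_def by (intro continuous_intros cont)
  have "\<bar>d s\<bar> \<le> 2 * integral {0..s} (\<lambda>r. \<bar>d r\<bar>)" if s: "s \<in> {0..1}" for s
  proof -
    define c :: "real \<Rightarrow> real" where "c r = (1 - ln 2) + 2 * (if t0 < r then ln 2 else 0)" for r
    have "((\<lambda>r. c r * d r) has_integral (- d s)) {0..s}"
      using has_integral_diff[OF res_avoid_vertex_has_integral[OF s, of True]
          res_avoid_vertex_has_integral[OF s, of False]]
      by (simp add: c_def d_def algebra_simps)
    moreover have "\<bar>c r\<bar> \<le> 2" for r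
      using ln_2_less_1 ln_gt_zero[of "2::real"] by (simp add: c_def del: ln_gt_zero_iff)
    then have "\<bar>c r * d r\<bar> \<le> 2 * \<bar>d r\<bar>" for r by (simp add: abs_mult mult_right_mono)
    moreover have "continuous_on {0..s} (\<lambda>r. 2 * \<bar>d r\<bar>)"
      using s by (intro continuous_intros continuous_on_subset[OF d_cont]) auto
    ultimately have "\<bar>- d s\<bar> \<le> integral {0..s} (\<lambda>r. 2 * \<bar>d r\<bar>)"
      by (intro has_integral_abs_le_integral)
    then show ?thesis by simp
  qed
  moreover have "continuous_on {0..1} (\<lambda>r. \<bar>d r\<bar>)" by (intro continuous_intros d_cont)
  ultimately have "\<bar>d t\<bar> = 0"
    by (intro gronwall_zero[where e = "\<lambda>r. \<bar>d r\<bar>" and K = 2 and b = 1, OF _ _ _ _ t]) simp_all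
  then show ?thesis by (simp add: d_def)
qed

lemma res_f_eq:
  assumes "t \<in> {0..1}"
  shows "res_f pH t = 1 - res_unmatched pH t"
proof -
  have "{S::bool set. True \<in> S} = {{True}, UNIV}" using UNIV_bool_set by (auto simp: UNIV_bool)
  moreover have "{True} \<noteq> (UNIV :: bool set)" by (auto simp: set_eq_iff)
  ultimately show ?thesis
    using res_total_mass[OF assms] by (simp add: res_f_def res_unmatched_def)
qed

lemma res_gbar_eq:
  assumes "t \<in> {0..1}"
  shows "1 - res_g pH t = 2 * res_unmatched pH t - pH t {}"
  using res_total_mass[OF assms] res_symmetric[OF assms] by (simp add: res_g_def res_unmatched_def)

lemma res_unmatched_has_integral:
  assumes "t \<in> {0..1}"
  shows "((\<lambda>r. - ((1 - ln 2) * res_unmatched pH r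
                   + (if t0 < r then ln 2 else 0) * (2 * res_unmatched pH r - pH r {})))
          has_integral (res_unmatched pH t - 1)) {0..t}"
  using res_avoid_vertex_has_integral[OF assms, of True] by (simp add: res_unmatched_def algebra_simps)

end

section \<open>Algorithm AUX\<close>

locale aux_setting =
  fixes I :: "'i set" and J :: "'j set" and N :: "'i \<Rightarrow> 'j set"
    and lam :: "'i \<Rightarrow> real" and x :: "'i \<Rightarrow> 'j \<Rightarrow> real" and FC :: "('i \<times> 'j) set"
    and t0 :: real and pH :: "real \<Rightarrow> bool set \<Rightarrow> real" and p :: "real \<Rightarrow> 'j set \<Rightarrow> real"
  assumes standing: "standing_instance I J N lam x"
    and labeling: "valid_labeling I J N x FC"
    and res_sol: "kolmogorov_sol UNIV {} (res_Q t0) pH"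
    and aux_sol: "kolmogorov_sol (Pow J) {} (aux_Q t0 I J N lam FC pH p) p"
begin

lemma finite_I: "finite I" and finite_J: "finite J"
  using standing unfolding standing_instance_def by blast+

lemma lam_nonneg: "i \<in> I \<Longrightarrow> 0 \<le> lam i"
  using standing unfolding standing_instance_def by force

definition other_nbr :: "'i \<Rightarrow> 'j \<Rightarrow> 'j" where
  "other_nbr i u = the_elem (N i - {u})"

lemma single_nbr_x:
  assumes "i \<in> I" and "u \<in> N i" and "card (N i) = 1"
  shows "x i u = lam i"
  using standing assms unfolding standing_instance_def by fastforce

lemma two_nbrs:
  assumes "i \<in> I" and "u \<in> N i" and "card (N i) \<noteq> 1"
  shows "x i u = lam i / 2" and "other_nbr i u \<noteq> u" and "other_nbr i u \<in> J"
proof -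
  obtain j1 j2 where j: "j1 \<noteq> j2" "N i = {j1, j2}" "x i j1 = lam i / 2" "x i j2 = lam i / 2"
    and "N i \<subseteq> J"
    using standing assms unfolding standing_instance_def by fastforce
  then have "N i - {u} = {if u = j1 then j2 else j1}" using assms(2) by auto
  then have "other_nbr i u = (if u = j1 then j2 else j1)" unfolding other_nbr_def by simp
  then show "x i u = lam i / 2" "other_nbr i u \<noteq> u" "other_nbr i u \<in> J"
    using j \<open>N i \<subseteq> J\<close> assms(2) by auto
qed

definition second_class_at :: "'j \<Rightarrow> 'i set" where
  "second_class_at u = {i\<in>I. u \<in> N i \<and> card (N i) \<noteq> 1 \<and> (i, u) \<notin> FC}"

lemma second_class_at_subset: "second_class_at u \<subseteq> {i\<in>I. u \<in> N i}"
  unfolding second_class_at_def by auto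

lemma second_class_atD:
  assumes "i \<in> second_class_at u"
  shows "x i u = lam i / 2" and "other_nbr i u \<noteq> u" and "other_nbr i u \<in> J" and "0 \<le> lam i"
  using assms two_nbrs lam_nonneg unfolding second_class_at_def by auto

lemma first_class_x_sum:
  assumes "u \<in> J"
  shows "(\<Sum>i\<in>{i\<in>I. u \<in> N i} - second_class_at u. x i u) = 1 - ln 2"
proof -
  have "{i\<in>I. u \<in> N i} - second_class_at u = {i\<in>I. u \<in> N i \<and> (i, u) \<in> FC}"
    using labeling unfolding second_class_at_def valid_labeling_def by auto
  then show ?thesis using labeling assms unfolding valid_labeling_def by simp
qed

lemma second_class_rate_sum:
  assumes "u \<in> J"
  shows "(\<Sum>i\<in>second_class_at u. lam i) = 2 * ln 2"
proof -
  have "(\<Sum>i\<in>{i\<in>I. u \<in> N i}. x i u) = 1"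
    using standing assms unfolding standing_instance_def by blast
  moreover have "(\<Sum>i\<in>{i\<in>I. u \<in> N i}. x i u)
      = (\<Sum>i\<in>{i\<in>I. u \<in> N i} - second_class_at u. x i u) + (\<Sum>i\<in>second_class_at u. x i u)"
    using second_class_at_subset finite_I by (intro sum.subset_diff) auto
  moreover have "(\<Sum>i\<in>second_class_at u. x i u) = (\<Sum>i\<in>second_class_at u. lam i) / 2"
    unfolding sum_divide_distrib by (intro sum.cong) (auto simp: second_class_atD)
  ultimately show ?thesis using first_class_x_sum[OF assms] by simp
qed

definition select_ratio :: "'i \<Rightarrow> 'j \<Rightarrow> real \<Rightarrow> real" where
  "select_ratio i u r =
     min ((1 - res_g pH r) / (2 * (1 - aux_f J p u r) - aux_g' J p u (other_nbr i u) r)) 1"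

definition match_rate :: "real \<Rightarrow> 'j \<Rightarrow> 'j set \<Rightarrow> real" where
  "match_rate r u S = (\<Sum>i\<in>{i\<in>I. u \<in> N i}. lam i * aux_prob t0 J N FC pH p i u r S)"

lemma aux_Q_eq:
  "aux_Q t0 I J N lam FC pH p r S S' = (\<Sum>w\<in>J-S. if S' = insert w S then match_rate r w S else 0)"
  unfolding aux_Q_def match_rate_def ..

lemma match_rate_eq:
  assumes "u \<in> J"
  shows "match_rate r u S = (1 - ln 2) + (if t0 < r then (\<Sum>i\<in>second_class_at u.
           lam i * (if other_nbr i u \<in> S then select_ratio i u r else select_ratio i u r / 2)) else 0)"
proof -
  let ?rate = "\<lambda>i. lam i * aux_prob t0 J N FC pH p i u r S"
  have "match_rate r u S
      = (\<Sum>i\<in>{i\<in>I. u \<in> N i} - second_class_at u. ?rate i) + (\<Sum>i\<in>second_class_at u. ?rate i)"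
    unfolding match_rate_def using second_class_at_subset finite_I by (intro sum.subset_diff) auto
  also have "(\<Sum>i\<in>{i\<in>I. u \<in> N i} - second_class_at u. ?rate i)
      = (\<Sum>i\<in>{i\<in>I. u \<in> N i} - second_class_at u. x i u)"
  proof (intro sum.cong refl)
    fix i assume i: "i \<in> {i\<in>I. u \<in> N i} - second_class_at u"
    show "?rate i = x i u"
    proof (cases "card (N i) = 1")
      case True
      then show ?thesis using i single_nbr_x by (simp add: aux_prob_def)
    next
      case False
      then have "(i, u) \<in> FC" using i unfolding second_class_at_def by auto
      then show ?thesis using i False two_nbrs by (simp add: aux_prob_def)
    qed
  qed
  also have "\<dots> = 1 - ln 2" by (rule first_class_x_sum[OF assms])
  also have "(\<Sum>i\<in>second_class_at u. ?rate i) = (\<Sum>i\<in>second_class_at u. if t0 < r then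
      lam i * (if other_nbr i u \<in> S then select_ratio i u r else select_ratio i u r / 2) else 0)"
    by (intro sum.cong refl)
      (auto simp: second_class_at_def aux_prob_def select_ratio_def other_nbr_def Let_def)
  finally show ?thesis by simp
qed

definition event_prob :: "real \<Rightarrow> ('j set \<Rightarrow> bool) \<Rightarrow> real" where
  "event_prob r E = (\<Sum>S\<in>{S. S \<subseteq> J \<and> E S}. p r S)"

definition unmatched :: "'j \<Rightarrow> real \<Rightarrow> real" where
  "unmatched u r = event_prob r (\<lambda>S. u \<notin> S)"

lemma aux_g'_eq: "aux_g' J p u v r = event_prob r (\<lambda>S. u \<notin> S \<and> v \<notin> S)"
  unfolding aux_g'_def event_prob_def ..

lemma finite_events: "finite {S. S \<subseteq> J \<and> E S}"
  using finite_J by (auto intro: finite_subset[of _ "Pow J"])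

lemma event_prob_nonneg: "r \<in> {0..1} \<Longrightarrow> 0 \<le> event_prob r E"
  using aux_sol unfolding event_prob_def kolmogorov_sol_def by (auto intro: sum_nonneg)

lemma event_prob_mono:
  assumes "r \<in> {0..1}" and "\<And>S. E S \<Longrightarrow> E' S"
  shows "event_prob r E \<le> event_prob r E'"
  unfolding event_prob_def
  using assms aux_sol unfolding kolmogorov_sol_def by (intro sum_mono2 finite_events) auto

lemma continuous_on_event_prob: "continuous_on {0..1} (\<lambda>r. event_prob r E)"
  using aux_sol unfolding event_prob_def kolmogorov_sol_def by (auto intro: continuous_on_sum)

lemma event_prob_True:
  assumes "t \<in> {0..1}"
  shows "event_prob t (\<lambda>_. True) = 1"
proof -
  have "((\<lambda>r. 0) has_integral (event_prob t (\<lambda>_. True) - 1)) {0..t}"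
    using kolmogorov_sol_avoid_has_integral[OF aux_sol finite_J assms aux_Q_eq, of "{}"]
    by (simp add: event_prob_def)
  then have "event_prob t (\<lambda>_. True) - 1 = 0" using has_integral_0 by (rule has_integral_unique)
  then show ?thesis by simp
qed

lemma aux_f_eq:
  assumes "t \<in> {0..1}"
  shows "aux_f J p u t = 1 - unmatched u t"
proof -
  have "event_prob t (\<lambda>_. True) = aux_f J p u t + unmatched u t"
    unfolding event_prob_def aux_f_def unmatched_def using finite_events
    by (subst sum.union_disjoint[symmetric]) (auto intro: sum.cong)
  then show ?thesis using event_prob_True[OF assms] by simp
qed

lemma unmatched_has_integral:
  assumes "t \<in> {0..1}" and "u \<in> J"
  shows "((\<lambda>r. - (\<Sum>S\<in>{S. S \<subseteq> J \<and> u \<notin> S}. p r S * match_rate r u S))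
          has_integral (unmatched u t - 1)) {0..t}"
  using kolmogorov_sol_avoid_has_integral[OF aux_sol finite_J assms(1) aux_Q_eq, of "{u}"] assms(2)
  by (simp add: unmatched_def event_prob_def)

lemma aux_g'_has_integral:
  assumes "t \<in> {0..1}" and "u \<in> J" and "v \<in> J" and "u \<noteq> v"
  shows "((\<lambda>r. - (\<Sum>S\<in>{S. S \<subseteq> J \<and> u \<notin> S \<and> v \<notin> S}. p r S * (match_rate r u S + match_rate r v S)))
          has_integral (aux_g' J p u v t - 1)) {0..t}"
  using kolmogorov_sol_avoid_has_integral[OF aux_sol finite_J assms(1) aux_Q_eq, of "{u, v}"] assms(2-)
  by (simp add: aux_g'_def)

lemma expected_match_rate:
  assumes "u \<in> J"
  shows "(\<Sum>S\<in>{S. S \<subseteq> J \<and> E S}. p r S * match_rate r u S)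
       = (1 - ln 2) * event_prob r E
         + (if t0 < r then (\<Sum>i\<in>second_class_at u. lam i * select_ratio i u r *
             (event_prob r E - event_prob r (\<lambda>S. E S \<and> other_nbr i u \<notin> S) / 2)) else 0)"
proof -
  let ?X = "{S. S \<subseteq> J \<and> E S}"
  let ?c = "\<lambda>i S. if other_nbr i u \<in> S then select_ratio i u r else select_ratio i u r / 2"
  have split: "(\<Sum>S\<in>?X. p r S * match_rate r u S)
      = (1 - ln 2) * event_prob r E
        + (if t0 < r then (\<Sum>i\<in>second_class_at u. lam i * (\<Sum>S\<in>?X. p r S * ?c i S)) else 0)"
    by (simp add: match_rate_eq[OF assms] event_prob_def distrib_left sum.distrib sum_distrib_left
        sum_distrib_right sum.swap[of _ ?X] mult.commute mult.left_commute)
  have inner: "(\<Sum>S\<in>?X. p r S * ?c i S)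
      = select_ratio i u r * (event_prob r E - event_prob r (\<lambda>S. E S \<and> other_nbr i u \<notin> S) / 2)" for i
  proof -
    have "(\<Sum>S\<in>?X. p r S * ?c i S)
        = (\<Sum>S\<in>?X. select_ratio i u r * p r S - select_ratio i u r / 2 * (if other_nbr i u \<notin> S then p r S else 0))"
      by (intro sum.cong) auto
    also have "\<dots> = select_ratio i u r * event_prob r E
        - select_ratio i u r / 2 * (\<Sum>S\<in>?X. if other_nbr i u \<notin> S then p r S else 0)"
      by (simp add: event_prob_def sum_subtractf sum_distrib_left)
    also have "(\<Sum>S\<in>?X. if other_nbr i u \<notin> S then p r S else 0)
        = event_prob r (\<lambda>S. E S \<and> other_nbr i u \<notin> S)"
      unfolding event_prob_def sum.inter_filter[OF finite_events, symmetric] by (rule sum.cong) auto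
    finally show ?thesis by (simp add: algebra_simps)
  qed
  show ?thesis unfolding split inner by (simp add: mult.assoc)
qed

text \<open>The first two terms are the rate at which H loses probability from \<open>E\<close> through \<open>u\<close> getting
matched, for the two events used: \<open>u\<close> unmatched (\<open>A = F\<close>, \<open>B = 1 - g\<close>), and \<open>u, v\<close> unmatched
(\<open>A = B = G\<close>).\<close>

lemma match_rate_deviation:
  assumes "u \<in> J"
  shows "(1 - ln 2) * A + (if t0 < r then ln 2 else 0) * B
           - (\<Sum>S\<in>{S. S \<subseteq> J \<and> E S}. p r S * match_rate r u S)
       = (1 - ln 2) * (A - event_prob r E)
         + (if t0 < r then (\<Sum>i\<in>second_class_at u. lam i * (B / 2 - select_ratio i u r *
             (event_prob r E - event_prob r (\<lambda>S. E S \<and> other_nbr i u \<notin> S) / 2))) else 0)"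
proof -
  define Y where "Y i = select_ratio i u r *
      (event_prob r E - event_prob r (\<lambda>S. E S \<and> other_nbr i u \<notin> S) / 2)" for i
  have "(\<Sum>i\<in>second_class_at u. lam i * (B / 2 - Y i))
      = (\<Sum>i\<in>second_class_at u. lam i) * (B / 2) - (\<Sum>i\<in>second_class_at u. lam i * Y i)"
    by (simp only: right_diff_distrib sum_subtractf sum_distrib_right)
  also have "(\<Sum>i\<in>second_class_at u. lam i) * (B / 2) = ln 2 * B"
    using second_class_rate_sum[OF assms] by simp
  finally show ?thesis
    unfolding Y_def by (simp add: expected_match_rate[OF assms] algebra_simps)
qed

lemma select_ratio_eq:
  assumes "r \<in> {0..1}"
  shows "select_ratio i u r = min ((2 * res_unmatched pH r - pH r {})
           / (2 * unmatched u r - aux_g' J p u (other_nbr i u) r)) 1"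
  using res_gbar_eq[OF res_sol assms] aux_f_eq[OF assms] by (simp add: select_ratio_def)

definition gap :: "'j \<Rightarrow> real \<Rightarrow> real" where
  "gap u r = \<bar>unmatched u r - res_unmatched pH r\<bar>"

definition pair_excess :: "'j \<Rightarrow> 'j \<Rightarrow> real \<Rightarrow> real" where
  "pair_excess u v r = max (aux_g' J p u v r - pH r {}) 0"

definition err :: "real \<Rightarrow> real" where
  "err r = (\<Sum>u\<in>J. gap u r) + (\<Sum>u\<in>J. \<Sum>v\<in>J-{u}. pair_excess u v r)"

lemma err_nonneg: "0 \<le> err r"
  unfolding err_def gap_def pair_excess_def by (intro add_nonneg_nonneg sum_nonneg) auto

lemma gap_add_pair_excess_le_err:
  assumes "u \<in> J" and "v \<in> J" and "v \<noteq> u"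
  shows "gap u r + pair_excess u v r \<le> err r"
proof -
  have "pair_excess u v r \<le> (\<Sum>v\<in>J-{u}. pair_excess u v r)"
    using assms finite_J by (intro member_le_sum) (auto simp: pair_excess_def)
  also have "\<dots> \<le> (\<Sum>u\<in>J. \<Sum>v\<in>J-{u}. pair_excess u v r)"
    using assms finite_J
    by (intro member_le_sum[where f = "\<lambda>u. \<Sum>v\<in>J-{u}. pair_excess u v r"] sum_nonneg)
      (auto simp: pair_excess_def)
  finally show ?thesis
    using member_le_sum[of u J "\<lambda>u. gap u r"] assms finite_J unfolding err_def gap_def by force
qed

lemma gap_le_err:
  assumes "u \<in> J"
  shows "gap u r \<le> err r"
proof -
  have "gap u r \<le> (\<Sum>u\<in>J. gap u r)"
    using assms finite_J by (intro member_le_sum) (auto simp: gap_def)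
  moreover have "0 \<le> (\<Sum>u\<in>J. \<Sum>v\<in>J-{u}. pair_excess u v r)"
    by (intro sum_nonneg) (simp add: pair_excess_def)
  ultimately show ?thesis by (simp add: err_def)
qed

lemma continuous_on_err: "continuous_on {0..1} err"
proof -
  have "continuous_on {0..1} (\<lambda>r. pH r S)" for S
    using res_sol unfolding kolmogorov_sol_def by blast
  then show ?thesis
    unfolding err_def gap_def pair_excess_def unmatched_def res_unmatched_def aux_g'_eq
    by (intro continuous_intros continuous_on_event_prob)
qed

lemma first_select_term_abs_le:
  assumes r: "r \<in> {0..1}" and u: "u \<in> J" and i: "i \<in> second_class_at u"
  shows "\<bar>(2 * res_unmatched pH r - pH r {}) / 2
           - select_ratio i u r * (unmatched u r - aux_g' J p u (other_nbr i u) r / 2)\<bar> \<le> err r"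
proof -
  define F G U g where "F = res_unmatched pH r" and "G = pH r {}" and "U = unmatched u r"
    and "g = aux_g' J p u (other_nbr i u) r"
  have "0 \<le> G" "G \<le> F"
    using res_sol r unfolding F_def G_def res_unmatched_def kolmogorov_sol_def by auto
  have "g \<le> U" "0 \<le> U"
    unfolding g_def U_def unmatched_def aux_g'_eq using r by (auto intro: event_prob_mono event_prob_nonneg)
  have "\<bar>(2 * F - G) / 2 - select_ratio i u r * (U - g / 2)\<bar>
      = \<bar>(2 * F - G) / 2 - min ((2 * F - G) / (2 * U - g)) 1 * ((2 * U - g) / 2)\<bar>"
    by (simp add: select_ratio_eq[OF r] F_def G_def U_def g_def diff_divide_distrib)
  also have "\<dots> \<le> max ((2 * F - G) - (2 * U - g)) 0 / 2"
    using \<open>0 \<le> G\<close> \<open>G \<le> F\<close> \<open>g \<le> U\<close> \<open>0 \<le> U\<close> by (intro min_ratio_half_diff_abs_le) auto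
  also have "\<dots> \<le> gap u r + pair_excess u (other_nbr i u) r"
    by (simp add: gap_def pair_excess_def F_def G_def U_def g_def max_def abs_if)
  also have "\<dots> \<le> err r"
    using second_class_atD[OF i] u by (intro gap_add_pair_excess_le_err) auto
  finally show ?thesis unfolding F_def G_def U_def g_def .
qed

lemma unmatched_rate_gap_abs_le:
  assumes r: "r \<in> {0..1}" and u: "u \<in> J"
  shows "\<bar>(1 - ln 2) * res_unmatched pH r + (if t0 < r then ln 2 else 0) * (2 * res_unmatched pH r - pH r {})
           - (\<Sum>S\<in>{S. S \<subseteq> J \<and> u \<notin> S}. p r S * match_rate r u S)\<bar> \<le> 2 * err r"
proof -
  define F G U where "F = res_unmatched pH r" and "G = pH r {}" and "U = unmatched u r"
  define X where "X i = (2 * F - G) / 2 - select_ratio i u r * (U - aux_g' J p u (other_nbr i u) r / 2)" for i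
  have "(1 - ln 2) * F + (if t0 < r then ln 2 else 0) * (2 * F - G)
      - (\<Sum>S\<in>{S. S \<subseteq> J \<and> u \<notin> S}. p r S * match_rate r u S)
      = (1 - ln 2) * (F - U) + (if t0 < r then \<Sum>i\<in>second_class_at u. lam i * X i else 0)"
    using match_rate_deviation[OF u, of F r "2 * F - G" "\<lambda>S. u \<notin> S"]
    by (simp add: X_def U_def unmatched_def aux_g'_eq event_prob_def)
  then have "\<bar>(1 - ln 2) * F + (if t0 < r then ln 2 else 0) * (2 * F - G)
      - (\<Sum>S\<in>{S. S \<subseteq> J \<and> u \<notin> S}. p r S * match_rate r u S)\<bar>
      \<le> \<bar>(1 - ln 2) * (F - U)\<bar> + \<bar>if t0 < r then \<Sum>i\<in>second_class_at u. lam i * X i else 0\<bar>"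
    by (simp only: abs_triangle_ineq)
  also have "\<dots> \<le> (1 - ln 2) * err r + 2 * ln 2 * err r"
  proof (rule add_mono)
    show "\<bar>(1 - ln 2) * (F - U)\<bar> \<le> (1 - ln 2) * err r"
      using gap_le_err[OF u, of r] ln_2_less_1 by (simp add: abs_mult gap_def F_def U_def mult_left_mono)
    show "\<bar>if t0 < r then \<Sum>i\<in>second_class_at u. lam i * X i else 0\<bar> \<le> 2 * ln 2 * err r"
      using sum_weighted_abs_le[of "second_class_at u" lam X "err r"] second_class_rate_sum[OF u]
        first_select_term_abs_le[OF r u] second_class_atD err_nonneg[of r]
      by (auto simp: X_def F_def G_def U_def)
  qed
  also have "\<dots> \<le> 2 * err r"
    using ln_2_less_1 err_nonneg[of r] mult_right_mono[of "ln 2" 1 "err r"] by (simp add: algebra_simps)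
  finally show ?thesis unfolding F_def G_def .
qed

lemma pair_select_term_le:
  assumes r: "r \<in> {0..1}" and a: "a \<in> {u, v}" "a \<in> J" and i: "i \<in> second_class_at a"
    and G: "pH r {} \<le> aux_g' J p u v r"
  shows "pH r {} / 2 - select_ratio i a r * (event_prob r (\<lambda>S. u \<notin> S \<and> v \<notin> S)
           - event_prob r (\<lambda>S. (u \<notin> S \<and> v \<notin> S) \<and> other_nbr i a \<notin> S) / 2) \<le> 2 * err r"
proof -
  let ?w = "other_nbr i a"
  have "?w \<in> J" "?w \<noteq> a" using second_class_atD[OF i] by auto
  have "pH r {} / 2 - select_ratio i a r * (event_prob r (\<lambda>S. u \<notin> S \<and> v \<notin> S)
           - event_prob r (\<lambda>S. (u \<notin> S \<and> v \<notin> S) \<and> ?w \<notin> S) / 2)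
      \<le> 2 * (gap a r + pair_excess a ?w r)"
    unfolding select_ratio_eq[OF r]
  proof (rule min_ratio_pair_deficit_le)
    show "pH r {} \<le> event_prob r (\<lambda>S. u \<notin> S \<and> v \<notin> S)" using G by (simp add: aux_g'_eq)
    show "0 \<le> pH r {}" "pH r {} \<le> res_unmatched pH r"
      using res_sol r unfolding res_unmatched_def kolmogorov_sol_def by auto
    show "\<bar>unmatched a r - res_unmatched pH r\<bar> \<le> gap a r" by (simp add: gap_def)
    show "aux_g' J p a ?w r - pH r {} \<le> pair_excess a ?w r" "0 \<le> pair_excess a ?w r"
      by (simp_all add: pair_excess_def)
  qed (use r a in \<open>auto simp: aux_g'_eq unmatched_def intro: event_prob_mono event_prob_nonneg\<close>)
  also have "\<dots> \<le> 2 * err r"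
    using gap_add_pair_excess_le_err[OF \<open>a \<in> J\<close> \<open>?w \<in> J\<close> \<open>?w \<noteq> a\<close>, of r] by simp
  finally show ?thesis .
qed

lemma pair_deviation_le:
  assumes r: "r \<in> {0..1}" and "u \<in> J" and "v \<in> J" and a: "a \<in> {u, v}"
    and G: "pH r {} \<le> aux_g' J p u v r"
  shows "(1 - ln 2) * pH r {} + (if t0 < r then ln 2 else 0) * pH r {}
           - (\<Sum>S\<in>{S. S \<subseteq> J \<and> u \<notin> S \<and> v \<notin> S}. p r S * match_rate r a S) \<le> 4 * err r"
proof -
  let ?E = "\<lambda>S. u \<notin> S \<and> v \<notin> S"
  define X where "X i = pH r {} / 2 - select_ratio i a r *
      (event_prob r ?E - event_prob r (\<lambda>S. ?E S \<and> other_nbr i a \<notin> S) / 2)" for i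
  have "a \<in> J" using a assms by auto
  have "(if t0 < r then \<Sum>i\<in>second_class_at a. lam i * X i else 0) \<le> 2 * ln 2 * (2 * err r)"
    using sum_weighted_le[of "second_class_at a" lam X "2 * err r"] second_class_rate_sum[OF \<open>a \<in> J\<close>]
      pair_select_term_le[OF r a \<open>a \<in> J\<close> _ G] second_class_atD err_nonneg[of r]
    by (auto simp: X_def)
  moreover have "(1 - ln 2) * (pH r {} - event_prob r ?E) \<le> 0"
    using G ln_2_less_1 by (simp add: aux_g'_eq mult_nonneg_nonpos)
  moreover have "ln 2 * err r \<le> 1 * err r"
    using ln_2_less_1 err_nonneg[of r] by (intro mult_right_mono) auto
  moreover have "(1 - ln 2) * pH r {} + (if t0 < r then ln 2 else 0) * pH r {}
      - (\<Sum>S\<in>{S. S \<subseteq> J \<and> u \<notin> S \<and> v \<notin> S}. p r S * match_rate r a S)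
      = (1 - ln 2) * (pH r {} - event_prob r ?E) + (if t0 < r then \<Sum>i\<in>second_class_at a. lam i * X i else 0)"
    using match_rate_deviation[OF \<open>a \<in> J\<close>, of "pH r {}" r "pH r {}" ?E] by (simp add: X_def)
  ultimately show ?thesis by linarith
qed

lemma pair_rate_excess_le:
  assumes "r \<in> {0..1}" and "u \<in> J" and "v \<in> J" and "pH r {} \<le> aux_g' J p u v r"
  shows "2 * ((1 - ln 2) * pH r {} + (if t0 < r then ln 2 else 0) * pH r {})
           - (\<Sum>S\<in>{S. S \<subseteq> J \<and> u \<notin> S \<and> v \<notin> S}. p r S * (match_rate r u S + match_rate r v S))
         \<le> 8 * err r"
  using pair_deviation_le[OF assms(1-3) _ assms(4), of u] pair_deviation_le[OF assms(1-3) _ assms(4), of v]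
  by (simp add: distrib_left sum.distrib)

section \<open>The Gronwall argument for AUX\<close>

lemma integral_err_nonneg:
  assumes "t \<in> {0..1}"
  shows "0 \<le> integral {0..t} err"
  using assms continuous_on_subset[OF continuous_on_err, of "{0..t}"] err_nonneg
  by (intro Henstock_Kurzweil_Integration.integral_nonneg integrable_continuous_interval) auto

lemma unmatched_diff_has_integral:
  assumes t: "t \<in> {0..1}" and u: "u \<in> J"
  shows "((\<lambda>r. (1 - ln 2) * res_unmatched pH r + (if t0 < r then ln 2 else 0) * (2 * res_unmatched pH r - pH r {})
            - (\<Sum>S\<in>{S. S \<subseteq> J \<and> u \<notin> S}. p r S * match_rate r u S))
          has_integral (unmatched u t - res_unmatched pH t)) {0..t}"
proof -
  have "((\<lambda>r. (1 - ln 2) * res_unmatched pH r + (if t0 < r then ln 2 else 0) * (2 * res_unmatched pH r - pH r {})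
            - (\<Sum>S\<in>{S. S \<subseteq> J \<and> u \<notin> S}. p r S * match_rate r u S))
          has_integral ((unmatched u t - 1) - (res_unmatched pH t - 1))) {0..t}"
    by (rule has_integral_eq[OF _ has_integral_diff[OF unmatched_has_integral[OF t u]
          res_unmatched_has_integral[OF res_sol t]]]) (simp add: algebra_simps)
  then show ?thesis by simp
qed

lemma pair_diff_has_integral:
  assumes t: "t \<in> {0..1}" and u: "u \<in> J" and v: "v \<in> J" and "u \<noteq> v"
  shows "((\<lambda>r. 2 * ((1 - ln 2) * pH r {} + (if t0 < r then ln 2 else 0) * pH r {})
            - (\<Sum>S\<in>{S. S \<subseteq> J \<and> u \<notin> S \<and> v \<notin> S}. p r S * (match_rate r u S + match_rate r v S)))
          has_integral (aux_g' J p u v t - pH t {})) {0..t}"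
proof -
  have "((\<lambda>r. 2 * ((1 - ln 2) * pH r {} + (if t0 < r then ln 2 else 0) * pH r {})
            - (\<Sum>S\<in>{S. S \<subseteq> J \<and> u \<notin> S \<and> v \<notin> S}. p r S * (match_rate r u S + match_rate r v S)))
          has_integral ((aux_g' J p u v t - 1) - (pH t {} - 1))) {0..t}"
    by (rule has_integral_eq[OF _ has_integral_diff[OF aux_g'_has_integral[OF t u v \<open>u \<noteq> v\<close>]
          res_empty_has_integral[OF res_sol t]]]) (simp add: algebra_simps)
  then show ?thesis by simp
qed

lemma gap_le_integral_err:
  assumes t: "t \<in> {0..1}" and u: "u \<in> J"
  shows "gap u t \<le> 2 * integral {0..t} err"
proof -
  have "\<bar>unmatched u t - res_unmatched pH t\<bar> \<le> integral {0..t} (\<lambda>r. 2 * err r)"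
  proof (rule has_integral_abs_le_integral[OF unmatched_diff_has_integral[OF t u]])
    show "continuous_on {0..t} (\<lambda>r. 2 * err r)"
      using t by (intro continuous_intros continuous_on_subset[OF continuous_on_err]) auto
    fix r assume "r \<in> {0..t}"
    then have "r \<in> {0..1}" using t by auto
    then show "\<bar>(1 - ln 2) * res_unmatched pH r + (if t0 < r then ln 2 else 0) * (2 * res_unmatched pH r - pH r {})
        - (\<Sum>S\<in>{S. S \<subseteq> J \<and> u \<notin> S}. p r S * match_rate r u S)\<bar> \<le> 2 * err r"
      by (rule unmatched_rate_gap_abs_le[OF _ u])
  qed
  then show ?thesis by (simp add: gap_def)
qed

lemma pair_excess_le_integral_err:
  assumes t: "t \<in> {0..1}" and u: "u \<in> J" and v: "v \<in> J" and "u \<noteq> v"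
  shows "pair_excess u v t \<le> 8 * integral {0..t} err"
proof -
  let ?h = "\<lambda>s. aux_g' J p u v s - pH s {}"
  have sub: "{0..t} \<subseteq> {0..1}" using t by auto
  have "?h t \<le> integral {0..t} (\<lambda>r. 8 * err r)"
  proof (rule integral_bound_while_nonneg)
    show "continuous_on {0..t} ?h"
      using res_sol unfolding aux_g'_eq kolmogorov_sol_def
      by (intro continuous_on_subset[OF _ sub] continuous_intros continuous_on_event_prob) auto
    show "((\<lambda>r. 2 * ((1 - ln 2) * pH r {} + (if t0 < r then ln 2 else 0) * pH r {})
            - (\<Sum>S\<in>{S. S \<subseteq> J \<and> u \<notin> S \<and> v \<notin> S}. p r S * (match_rate r u S + match_rate r v S)))
          has_integral ?h s) {0..s}" if "s \<in> {0..t}" for s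
      using that sub by (intro pair_diff_has_integral u v \<open>u \<noteq> v\<close>) auto
    show "continuous_on {0..t} (\<lambda>r. 8 * err r)"
      by (intro continuous_intros continuous_on_subset[OF continuous_on_err sub])
    show "2 * ((1 - ln 2) * pH r {} + (if t0 < r then ln 2 else 0) * pH r {})
            - (\<Sum>S\<in>{S. S \<subseteq> J \<and> u \<notin> S \<and> v \<notin> S}. p r S * (match_rate r u S + match_rate r v S))
          \<le> 8 * err r" if "r \<in> {0..t}" and "0 \<le> ?h r" for r
      using that sub by (intro pair_rate_excess_le u v) auto
  qed (use t err_nonneg in auto)
  then show ?thesis using integral_err_nonneg[OF t] by (simp add: pair_excess_def)
qed

lemma err_le_integral:
  assumes t: "t \<in> {0..1}"
  shows "err t \<le> (2 * real (card J) + 8 * real (card J) ^ 2) * integral {0..t} err"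
proof -
  let ?I = "integral {0..t} err"
  have "(\<Sum>u\<in>J. gap u t) \<le> real (card J) * (2 * ?I)"
    using gap_le_integral_err[OF t] by (intro sum_bounded_above) auto
  moreover have "(\<Sum>u\<in>J. \<Sum>v\<in>J-{u}. pair_excess u v t) \<le> real (card J) * (real (card J) * (8 * ?I))"
  proof (intro sum_bounded_above)
    fix u assume "u \<in> J"
    have "(\<Sum>v\<in>J-{u}. pair_excess u v t) \<le> real (card (J - {u})) * (8 * ?I)"
      using pair_excess_le_integral_err[OF t \<open>u \<in> J\<close>] by (intro sum_bounded_above) auto
    also have "\<dots> \<le> real (card J) * (8 * ?I)"
      using integral_err_nonneg[OF t] finite_J
      by (intro mult_right_mono) (auto simp: card_mono)
    finally show "(\<Sum>v\<in>J-{u}. pair_excess u v t) \<le> real (card J) * (8 * ?I)" .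
  qed
  ultimately show ?thesis unfolding err_def by (simp add: power2_eq_square algebra_simps)
qed

lemma err_eq_0: "t \<in> {0..1} \<Longrightarrow> err t = 0"
  by (rule gronwall_zero[OF continuous_on_err err_nonneg _ err_le_integral]) auto

lemma aux_f_eq_res_f:
  assumes "u \<in> J" and "t \<in> {0..1}"
  shows "aux_f J p u t = res_f pH t"
  using gap_le_err[OF assms(1), of t] err_eq_0[OF assms(2)] gap_def[of u t]
    aux_f_eq[OF assms(2)] res_f_eq[OF res_sol assms(2)] by simp

end

theorem corollary4p7:
  fixes I :: "'i set" and J :: "'j set" and N :: "'i \<Rightarrow> 'j set"
    and lam :: "'i \<Rightarrow> real" and x :: "'i \<Rightarrow> 'j \<Rightarrow> real" and FC :: "('i \<times> 'j) set"
    and t0 :: real and pH :: "real \<Rightarrow> bool set \<Rightarrow> real" and p :: "real \<Rightarrow> 'j set \<Rightarrow> real"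
  assumes "standing_instance I J N lam x"
    and "valid_labeling I J N x FC"
    and "kolmogorov_sol UNIV {} (res_Q t0) pH"
    and "kolmogorov_sol (Pow J) {} (aux_Q t0 I J N lam FC pH p) p"
  shows "\<forall>u\<in>J. \<forall>t\<in>{0..1}. aux_f J p u t = res_f pH t"
proof -
  interpret aux_setting I J N lam x FC t0 pH p
    using assms by unfold_locales
  show ?thesis using aux_f_eq_res_f by blast
qed

end
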